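(* Under the hypotheses of Proposition 5.1 (namely: $X$ a real separable Hilbert space, $F:X\to X$ monotone and hemicontinuous, $F(x^\dagger)=y$, $\bar x\in X$, $F$ Fréchet differentiable on $\mathcal B_r(x^\dagger)$ with $r>\|x^\dagger-\bar x\|$ and $x\mapsto F'(x)$ continuous there, the nonlinearity condition $(F'(\tilde x)-F'(x))v=F'(x)g(\tilde x,x,v)$ with $\|g(\tilde x,x,v)\|\le k_0\|\tilde x-x\|\|v\|$ for all $\tilde x,x\in\mathcal B_r(x^\dagger)$, $v\in X$, and $k_0\|x^\dagger-\bar x\|<2$), if moreover $x^\dagger-\bar x\perp\mathcal N(F'(x^\dagger))$, then $\lim_{\alpha\to0}\|x_\alpha-x^\dagger\|=0$, where $x_\alpha$ solves $F(x_\alpha)+\alpha(x_\alpha-\bar x)=y$.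
   Context: Monotone: $\langle F(x)-F(\tilde x),x-\tilde x\rangle\ge0$; hemicontinuous: $t\mapsto\langle F(x+tv),z\rangle$ continuous on $[0,1]$. $\mathcal N(\cdot)$ denotes the null space; $\mathcal B_r(x^\dagger)$ the closed ball of radius $r$ around $x^\dagger$. *)

theory Defs
  imports "HOL-Analysis.Analysis"
begin

definition monotone_op :: "('a::real_inner \<Rightarrow> 'a) \<Rightarrow> bool" where
  "monotone_op F \<longleftrightarrow> (\<forall>x x'. inner (F x - F x') (x - x') \<ge> 0)"

definition hemicontinuous :: "('a::real_inner \<Rightarrow> 'a) \<Rightarrow> bool" where
  "hemicontinuous F \<longleftrightarrow>
     (\<forall>x v z. continuous_on {0..1} (\<lambda>t::real. inner (F (x + t *\<^sub>R v)) z))"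

end

theory Submission
  imports Defs
begin

text \<open>
  Write e = x_alpha - x_dag and p = x_dag - x_bar. Monotonicity of F, tested at x_alpha and x_dag,
  gives |e|^2 <= -<p, e>, in particular |e| <= |p|. If p were a source element F'(x_dag)^* w,
  integrating the nonlinearity condition along the segment from x_dag to x_alpha would bound
  -<p, e> by O(alpha) plus k0 |p| |e|^2 / 2, and k0 |p| < 2 lets the left-hand side absorb the
  last term. In general p is orthogonal to the null space of F'(x_dag) only, which in a Hilbert
  space places it in the closure of the range of the adjoint; approximating p by source elements
  v makes the remaining error term |p - v| |p| as small as we like.
\<close>

subsection \<open>Orthogonal projection and the Riesz representation\<close>

lemma parallelogram_law:
  fixes x y :: "'a::real_inner"
  shows "norm (x + y)^2 + norm (x - y)^2 = 2 * norm x ^ 2 + 2 * norm y ^ 2"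
  by (simp add: power2_norm_eq_inner inner_simps algebra_simps)

lemma minimizing_sequence_Cauchy:
  fixes s :: "nat \<Rightarrow> 'a::real_inner"
  assumes "convex C" and s: "\<And>n. s n \<in> C" and lower: "\<And>x. x \<in> C \<Longrightarrow> \<delta> \<le> norm (p - x)"
    and lim: "(\<lambda>n. norm (p - s n)) \<longlonglongrightarrow> \<delta>"
  shows "Cauchy s"
proof (rule metric_CauchyI)
  fix \<epsilon> :: real
  assume "\<epsilon> > 0"
  have "\<delta> \<ge> 0"
    using lim by (rule tendsto_lowerbound) auto
  have "(\<lambda>n. norm (p - s n)^2) \<longlonglongrightarrow> \<delta>^2"
    using lim by (rule tendsto_power)
  moreover have "\<delta>^2 < \<delta>^2 + \<epsilon>^2/4"
    using \<open>\<epsilon> > 0\<close> by simp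
  ultimately obtain N where N: "\<And>n. n \<ge> N \<Longrightarrow> norm (p - s n)^2 < \<delta>^2 + \<epsilon>^2/4"
    by (metis (no_types, lifting) eventually_sequentially order_tendstoD(2))
  have "dist (s i) (s j) < \<epsilon>" if "i \<ge> N" "j \<ge> N" for i j
  proof -
    have "(1/2) *\<^sub>R s i + (1/2) *\<^sub>R s j \<in> C"
      using \<open>convex C\<close> s by (intro convexD) auto
    then have "\<delta>^2 \<le> norm (p - ((1/2) *\<^sub>R s i + (1/2) *\<^sub>R s j))^2"
      using lower \<open>\<delta> \<ge> 0\<close> by (simp add: power_mono)
    also have "\<dots> = norm ((p - s i) + (p - s j))^2 / 4"
    proof -
      have "p - ((1/2) *\<^sub>R s i + (1/2) *\<^sub>R s j) = (1/2) *\<^sub>R ((p - s i) + (p - s j))"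
        by (simp add: algebra_simps scaleR_2 flip: scaleR_add_left)
      then show ?thesis
        by (simp add: power_mult_distrib power_divide)
    qed
    finally have "norm (s i - s j)^2 \<le> 2 * norm (p - s i)^2 + 2 * norm (p - s j)^2 - 4 * \<delta>^2"
      using parallelogram_law[of "p - s i" "p - s j"] by (simp add: norm_minus_commute)
    also have "\<dots> < \<epsilon>^2"
      using N[OF \<open>i \<ge> N\<close>] N[OF \<open>j \<ge> N\<close>] by simp
    finally show ?thesis
      using \<open>\<epsilon> > 0\<close> by (simp add: dist_norm power_less_imp_less_base)
  qed
  then show "\<exists>N. \<forall>m\<ge>N. \<forall>n\<ge>N. dist (s m) (s n) < \<epsilon>"
    by blast
qed

lemma closest_point_exists_complete:
  fixes C :: "'a::{real_inner,complete_space} set"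
  assumes "closed C" "convex C" "C \<noteq> {}"
  obtains m where "m \<in> C" "\<And>x. x \<in> C \<Longrightarrow> norm (p - m) \<le> norm (p - x)"
proof -
  define \<delta> where "\<delta> = Inf ((\<lambda>x. norm (p - x)) ` C)"
  have lower: "\<delta> \<le> norm (p - x)" if "x \<in> C" for x
    unfolding \<delta>_def using that by (auto intro!: cInf_lower bdd_belowI[of _ 0])
  have "\<exists>x\<in>C. norm (p - x) < \<delta> + 1 / Suc n" for n
    using cInf_lessD[of "(\<lambda>x. norm (p - x)) ` C" "\<delta> + 1 / Suc n"] \<open>C \<noteq> {}\<close>
    unfolding \<delta>_def by auto
  then obtain s where s: "\<And>n. s n \<in> C" "\<And>n. norm (p - s n) < \<delta> + 1 / Suc n"
    by metis
  have lim: "(\<lambda>n. norm (p - s n)) \<longlonglongrightarrow> \<delta>"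
  proof (rule tendsto_sandwich[of "\<lambda>_. \<delta>" _ _ "\<lambda>n. \<delta> + 1 / Suc n"])
    show "(\<lambda>n. \<delta> + 1 / Suc n) \<longlonglongrightarrow> \<delta>"
      using tendsto_add[OF tendsto_const LIMSEQ_Suc[OF lim_inverse_n']] by simp
  qed (use lower s in \<open>auto intro!: always_eventually less_imp_le\<close>)
  obtain m where "s \<longlonglongrightarrow> m"
    using minimizing_sequence_Cauchy[OF \<open>convex C\<close> s(1) lower lim]
    by (auto simp: Cauchy_convergent_iff convergent_def)
  then have "m \<in> C" and "(\<lambda>n. norm (p - s n)) \<longlonglongrightarrow> norm (p - m)"
    using \<open>closed C\<close> s(1) by (auto simp: closed_sequential_limits intro!: tendsto_intros)
  with lim have "norm (p - m) = \<delta>"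
    using LIMSEQ_unique by blast
  with \<open>m \<in> C\<close> lower show ?thesis
    using that by auto
qed

lemma inner_eq_0_if_norm_le_norm_diff:
  fixes q u :: "'a::real_inner"
  assumes "\<And>t::real. norm q \<le> norm (q - t *\<^sub>R u)"
  shows "inner q u = 0"
proof (cases "u = 0")
  case False
  define t where "t = inner q u / (norm u)^2"
  have "(norm q)^2 \<le> norm (q - t *\<^sub>R u)^2"
    using assms by (simp add: power_mono)
  also have "\<dots> = (norm q)^2 - (inner q u)^2 / (norm u)^2"
    using False unfolding t_def power2_norm_eq_inner
    by (simp add: inner_simps inner_commute field_simps power2_eq_square)
  finally have "(inner q u)^2 / (norm u)^2 \<le> 0"
    by simp
  with False show ?thesis
    by (simp add: divide_le_0_iff)
qed simp

lemma orthogonal_projection_onto_closure: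
  fixes M :: "'a::{real_inner,complete_space} set"
  assumes "subspace M"
  obtains m where "m \<in> closure M" "\<And>u. u \<in> M \<Longrightarrow> inner (p - m) u = 0"
proof -
  obtain m where m: "m \<in> closure M" "\<And>x. x \<in> closure M \<Longrightarrow> norm (p - m) \<le> norm (p - x)"
    using closest_point_exists_complete[of "closure M" p] assms
    by (metis closed_closure closure_eq_empty convex_closure empty_iff subspace_0 subspace_imp_convex)
  have "m + t *\<^sub>R u \<in> closure M" if "u \<in> M" for u t
  proof -
    have "(+) (t *\<^sub>R u) ` M \<subseteq> M"
      using assms that by (auto intro: subspace_add subspace_scale)
    then have "(+) (t *\<^sub>R u) ` closure M \<subseteq> closure M"
      by (metis closure_mono closure_translation)
    with m(1) show ?thesis
      by (auto simp: add.commute)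
  qed
  then have "inner (p - m) u = 0" if "u \<in> M" for u
    using m(2) that by (intro inner_eq_0_if_norm_le_norm_diff) (simp add: diff_diff_eq)
  with m(1) show ?thesis
    using that by blast
qed

lemma riesz_representation:
  fixes f :: "'a::{real_inner,complete_space} \<Rightarrow> real"
  assumes "bounded_linear f"
  obtains v where "\<And>u. f u = inner v u"
proof (cases "\<forall>u. f u = 0")
  case True
  then show ?thesis
    using that[of 0] by simp
next
  case False
  then obtain z0 where "f z0 \<noteq> 0"
    by blast
  interpret f: bounded_linear f by fact
  define N where "N = {u. f u = 0}"
  have "subspace N" "closed N"
    unfolding N_def subspace_def
    by (auto simp: f.add f.scale intro!: closed_Collect_eq continuous_intros f.continuous_on)
  then obtain m where m: "m \<in> N" "\<And>u. u \<in> N \<Longrightarrow> inner (z0 - m) u = 0"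
    using orthogonal_projection_onto_closure[of N z0] closure_closed by metis
  define z where "z = z0 - m"
  have fz: "f z \<noteq> 0"
    using m(1) \<open>f z0 \<noteq> 0\<close> unfolding z_def N_def by (simp add: f.diff)
  have "inner z u = f u / f z * (norm z)^2" for u
  proof -
    have "u - (f u / f z) *\<^sub>R z \<in> N"
      using fz unfolding N_def by (simp add: f.diff f.scale)
    then have "inner z (u - (f u / f z) *\<^sub>R z) = 0"
      using m(2) unfolding z_def by blast
    then show ?thesis
      by (simp add: inner_simps power2_norm_eq_inner)
  qed
  moreover have "z \<noteq> 0"
    using fz by auto
  ultimately show ?thesis
    using that[of "(f z / (norm z)^2) *\<^sub>R z"] fz by simp
qed

text \<open>The range of the Hilbert adjoint of A, described without constructing the adjoint.\<close>
definition adjoint_range :: "('a::real_inner \<Rightarrow>\<^sub>L 'b::real_inner) \<Rightarrow> 'a set" where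
  "adjoint_range A = {v. \<exists>w. \<forall>u. inner v u = inner w (A u)}"

lemma subspace_adjoint_range: "subspace (adjoint_range A)"
  unfolding subspace_def adjoint_range_def
proof safe
  fix x z w1 w2
  assume "\<forall>u. inner x u = inner w1 (A u)" "\<forall>u. inner z u = inner w2 (A u)"
  then show "\<exists>w. \<forall>u. inner (x + z) u = inner w (A u)"
    by (intro exI[of _ "w1 + w2"]) (simp add: inner_simps)
next
  fix c x w
  assume "\<forall>u. inner x u = inner w (A u)"
  then show "\<exists>w'. \<forall>u. inner (c *\<^sub>R x) u = inner w' (A u)"
    by (intro exI[of _ "c *\<^sub>R w"]) simp
qed (auto intro: exI[of _ 0])

lemma orthogonal_kernel_imp_in_closure_adjoint_range:
  fixes A :: "'a::{real_inner,complete_space} \<Rightarrow>\<^sub>L 'b::real_inner"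
  assumes orth: "\<And>u. A u = 0 \<Longrightarrow> inner p u = 0"
  shows "p \<in> closure (adjoint_range A)"
proof -
  obtain m where m: "m \<in> closure (adjoint_range A)" "\<And>u. u \<in> adjoint_range A \<Longrightarrow> inner (p - m) u = 0"
    using orthogonal_projection_onto_closure[OF subspace_adjoint_range] by blast
  define q where "q = p - m"
  have "bounded_linear (\<lambda>u. inner (A q) (A u))"
    by (intro bounded_linear_compose[OF bounded_linear_inner_right] blinfun.bounded_linear_right)
  then obtain v where v: "\<And>u. inner (A q) (A u) = inner v u"
    using riesz_representation by blast
  then have "v \<in> adjoint_range A"
    unfolding adjoint_range_def by (intro CollectI exI[of _ "A q"]) simp
  then have "inner (A q) (A q) = 0"
    using m(2) v[of q] unfolding q_def by (simp add: inner_commute)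
  then have "inner p q = 0"
    using orth by simp
  moreover have "closure (adjoint_range A) \<subseteq> {x. inner q x = 0}"
    using m(2) unfolding q_def by (intro closure_minimal) (auto simp: closed_hyperplane)
  ultimately have "inner q q = 0"
    using m(1) unfolding q_def by (auto simp: inner_simps inner_commute)
  with m(1) show ?thesis
    unfolding q_def by simp
qed

subsection \<open>Lavrentiev regularization of a monotone equation\<close>

lemma increment_le_if_derivative_le_affine:
  fixes \<psi> \<psi>' :: "real \<Rightarrow> real"
  assumes deriv: "\<And>t. 0 \<le> t \<Longrightarrow> t \<le> 1 \<Longrightarrow> (\<psi> has_real_derivative \<psi>' t) (at t)"
    and le: "\<And>t. 0 \<le> t \<Longrightarrow> t \<le> 1 \<Longrightarrow> \<psi>' t \<le> c + t * K"
  shows "\<psi> 1 - \<psi> 0 \<le> c + K / 2"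
proof -
  define h where "h t = t * c + t^2 / 2 * K - \<psi> t" for t
  have "h 0 \<le> h 1"
  proof (rule DERIV_nonneg_imp_nondecreasing[of 0 1])
    fix t :: real
    assume t: "0 \<le> t" "t \<le> 1"
    have "(h has_real_derivative c + t * K - \<psi>' t) (at t)"
      unfolding h_def by (auto intro!: derivative_eq_intros deriv[OF t])
    with le[OF t] show "\<exists>D. (h has_real_derivative D) (at t) \<and> 0 \<le> D"
      by (intro exI[of _ "c + t * K - \<psi>' t"]) simp
  qed simp
  then show ?thesis
    unfolding h_def by simp
qed

lemma tendsto_0_at_right_0_if_le_eps_plus_linear:
  fixes E :: "real \<Rightarrow> real"
  assumes nonneg: "\<And>\<alpha>. \<alpha> > 0 \<Longrightarrow> 0 \<le> E \<alpha>"
    and bound: "\<And>\<epsilon>. \<epsilon> > 0 \<Longrightarrow> \<exists>C. \<forall>\<alpha>>0. E \<alpha> \<le> \<epsilon> + C * \<alpha>"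
  shows "(E \<longlongrightarrow> 0) (at_right 0)"
proof (rule tendstoI)
  fix \<eta> :: real
  assume "\<eta> > 0"
  then obtain C where C: "\<And>\<alpha>. \<alpha> > 0 \<Longrightarrow> E \<alpha> \<le> \<eta> / 2 + C * \<alpha>"
    using bound[of "\<eta> / 2"] by auto
  define k where "k = \<bar>C\<bar> + 1"
  have "k > 0"
    unfolding k_def by (simp add: add_nonneg_pos)
  define b where "b = \<eta> / (2 * k)"
  have "b > 0"
    using \<open>\<eta> > 0\<close> \<open>k > 0\<close> unfolding b_def by simp
  have "dist (E \<alpha>) 0 < \<eta>" if "0 < \<alpha>" "\<alpha> < b" for \<alpha>
  proof -
    have "C * \<alpha> \<le> k * \<alpha>"
      using \<open>0 < \<alpha>\<close> unfolding k_def by (intro mult_right_mono) auto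
    also have "\<dots> < k * b"
      using \<open>\<alpha> < b\<close> \<open>k > 0\<close> by simp
    also have "\<dots> = \<eta> / 2"
      using \<open>k > 0\<close> unfolding b_def by simp
    finally show ?thesis
      using C[OF \<open>0 < \<alpha>\<close>] nonneg[OF \<open>0 < \<alpha>\<close>] by simp
  qed
  with \<open>b > 0\<close> show "\<forall>\<^sub>F \<alpha> in at_right 0. dist (E \<alpha>) 0 < \<eta>"
    unfolding eventually_at_right_field by blast
qed

locale monotone_lavrentiev =
  fixes F :: "'a::real_inner \<Rightarrow> 'a"
    and F' :: "'a \<Rightarrow> ('a \<Rightarrow>\<^sub>L 'a)"
    and g :: "'a \<Rightarrow> 'a \<Rightarrow> 'a \<Rightarrow> 'a"
    and xdag xbar y :: 'a and r k0 :: real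
    and xa :: "real \<Rightarrow> 'a"
  assumes mono: "monotone_op F"
    and sol: "F xdag = y"
    and r: "r > norm (xdag - xbar)"
    and deriv: "\<And>x. x \<in> cball xdag r \<Longrightarrow> (F has_derivative blinfun_apply (F' x)) (at x)"
    and nonlin_eq: "\<And>x' x v. x' \<in> cball xdag r \<Longrightarrow> x \<in> cball xdag r \<Longrightarrow>
        blinfun_apply (F' x' - F' x) v = blinfun_apply (F' x) (g x' x v)"
    and nonlin_bd: "\<And>x' x v. x' \<in> cball xdag r \<Longrightarrow> x \<in> cball xdag r \<Longrightarrow>
        norm (g x' x v) \<le> k0 * norm (x' - x) * norm v"
    and xa: "\<And>\<alpha>. \<alpha> > 0 \<Longrightarrow> F (xa \<alpha>) + \<alpha> *\<^sub>R (xa \<alpha> - xbar) = y"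
begin

lemma F_xa_eq:
  assumes "\<alpha> > 0"
  shows "F (xa \<alpha>) = y - \<alpha> *\<^sub>R ((xa \<alpha> - xdag) + (xdag - xbar))"
  using xa[OF assms] by (simp add: algebra_simps)

lemma norm_error_sq_le:
  assumes "\<alpha> > 0"
  shows "norm (xa \<alpha> - xdag)^2 \<le> - inner (xdag - xbar) (xa \<alpha> - xdag)"
proof -
  define e where "e = xa \<alpha> - xdag"
  have "F (xa \<alpha>) - F xdag = - \<alpha> *\<^sub>R (e + (xdag - xbar))"
    using F_xa_eq[OF assms] sol unfolding e_def by simp
  moreover have "0 \<le> inner (F (xa \<alpha>) - F xdag) e"
    using mono unfolding monotone_op_def e_def by blast
  ultimately have "\<alpha> * inner (e + (xdag - xbar)) e \<le> 0"
    by simp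
  then have "inner (e + (xdag - xbar)) e \<le> 0"
    using assms by (simp add: mult_le_0_iff)
  then show ?thesis
    unfolding e_def by (simp add: inner_simps power2_norm_eq_inner inner_commute)
qed

lemma norm_error_le:
  assumes "\<alpha> > 0"
  shows "norm (xa \<alpha> - xdag) \<le> norm (xdag - xbar)"
proof -
  define e where "e = xa \<alpha> - xdag"
  have "norm e * norm e \<le> norm (xdag - xbar) * norm e"
    using norm_error_sq_le[OF assms] Cauchy_Schwarz_ineq2[of "xdag - xbar" e]
    unfolding e_def by (simp add: power2_eq_square)
  then have "norm e \<le> norm (xdag - xbar)"
    by (cases "norm e = 0") (auto simp: mult_le_cancel_right)
  then show ?thesis
    unfolding e_def .
qed

lemma segment_in_cball:
  assumes "norm e \<le> r" "0 \<le> t" "t \<le> 1"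
  shows "xdag + t *\<^sub>R e \<in> cball xdag r"
  using assms mult_left_le_one_le[of "norm e" t] by (simp add: dist_norm)

lemma has_real_derivative_inner_F_segment:
  assumes "norm e \<le> r" "0 \<le> t" "t \<le> 1"
  shows "((\<lambda>s. inner w (F (xdag + s *\<^sub>R e))) has_real_derivative inner w (F' (xdag + t *\<^sub>R e) e)) (at t)"
proof -
  have "((\<lambda>s. xdag + s *\<^sub>R e) has_derivative (\<lambda>s. s *\<^sub>R e)) (at t)"
    by (auto intro!: derivative_eq_intros)
  from has_derivative_compose[OF this deriv[OF segment_in_cball[OF assms]]]
  have "((\<lambda>s. F (xdag + s *\<^sub>R e)) has_derivative (\<lambda>s. F' (xdag + t *\<^sub>R e) (s *\<^sub>R e))) (at t)" .
  from bounded_linear.has_derivative[OF bounded_linear_inner_right this, of w] show ?thesis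
    unfolding has_field_derivative_def
    by (rule has_derivative_eq_rhs) (auto simp: blinfun.scaleR_right)
qed

lemma inner_derivative_segment_le:
  assumes "norm e \<le> r" "0 \<le> t" "t \<le> 1"
    and v: "\<And>u. inner v u = inner w (F' xdag u)"
  shows "inner w (F' (xdag + t *\<^sub>R e) e) \<le> inner v e + t * (norm v * k0 * (norm e)^2)"
proof -
  define x where "x = xdag + t *\<^sub>R e"
  have x: "x \<in> cball xdag r" and xdag: "xdag \<in> cball xdag r"
    using segment_in_cball[OF assms(1-3)] assms(1) unfolding x_def
    by (auto intro: order_trans[OF norm_ge_zero])
  have "F' x e = F' xdag e + F' xdag (g x xdag e)"
    using nonlin_eq[OF x xdag, of e] by (simp add: blinfun.diff_left algebra_simps)
  then have "inner w (F' x e) = inner v e + inner v (g x xdag e)"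
    by (simp add: inner_simps v)
  also have "inner v (g x xdag e) \<le> norm v * norm (g x xdag e)"
    by (rule norm_cauchy_schwarz)
  also have "\<dots> \<le> norm v * (k0 * norm (x - xdag) * norm e)"
    using nonlin_bd[OF x xdag] by (simp add: mult_left_mono)
  also have "\<dots> = t * (norm v * k0 * (norm e)^2)"
    using assms(2) unfolding x_def by (simp add: power2_eq_square)
  finally show ?thesis
    unfolding x_def by simp
qed

lemma error_estimate:
  assumes "\<alpha> > 0" and v: "\<And>u. inner v u = inner w (F' xdag u)"
  shows "(1 - norm v * k0 / 2) * norm (xa \<alpha> - xdag)^2
    \<le> norm (xdag - xbar - v) * norm (xdag - xbar) + 2 * \<alpha> * norm (xdag - xbar) * norm w"
proof -
  define e where "e = xa \<alpha> - xdag"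
  define p where "p = xdag - xbar"
  define K where "K = norm v * k0 * (norm e)^2"
  define \<psi> where "\<psi> s = inner w (F (xdag + s *\<^sub>R e))" for s
  have e_le: "norm e \<le> norm p"
    using norm_error_le[OF assms(1)] unfolding e_def p_def .
  with r have "norm e \<le> r"
    unfolding p_def by simp
  then have "\<psi> 1 - \<psi> 0 \<le> inner v e + K / 2"
    unfolding \<psi>_def K_def
    by (intro increment_le_if_derivative_le_affine
        [where \<psi>' = "\<lambda>t. inner w (F' (xdag + t *\<^sub>R e) e)"]
        has_real_derivative_inner_F_segment inner_derivative_segment_le v)
  moreover have "\<psi> 1 - \<psi> 0 = - \<alpha> * inner w (e + p)"
    using F_xa_eq[OF assms(1)] sol unfolding \<psi>_def e_def p_def by (simp add: inner_simps)
  moreover have "inner w (e + p) \<le> norm w * (2 * norm p)"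
  proof -
    have "norm (e + p) \<le> 2 * norm p"
      using e_le norm_triangle_ineq[of e p] by simp
    then show ?thesis
      using norm_cauchy_schwarz[of w "e + p"] by (meson mult_left_mono norm_ge_zero order_trans)
  qed
  then have "\<alpha> * inner w (e + p) \<le> \<alpha> * (norm w * (2 * norm p))"
    using assms(1) by (intro mult_left_mono) auto
  ultimately have "- inner v e \<le> 2 * \<alpha> * norm p * norm w + K / 2"
    by (simp add: algebra_simps)
  moreover have "(norm e)^2 \<le> - inner (p - v) e - inner v e"
    using norm_error_sq_le[OF assms(1)] unfolding e_def p_def by (simp add: inner_simps)
  moreover have "- inner (p - v) e \<le> norm (p - v) * norm p"
    using Cauchy_Schwarz_ineq2[of "p - v" e] e_le by (smt (verit) mult_left_mono norm_ge_zero)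
  ultimately show ?thesis
    unfolding e_def p_def K_def by (simp add: algebra_simps)
qed

lemma norm_error_sq_le_eps_plus_linear:
  assumes small: "k0 * norm (xdag - xbar) < 2"
    and source: "xdag - xbar \<in> closure (adjoint_range (F' xdag))"
    and "\<epsilon> > 0"
  shows "\<exists>C. \<forall>\<alpha>>0. norm (xa \<alpha> - xdag)^2 \<le> \<epsilon> + C * \<alpha>"
proof -
  define p where "p = xdag - xbar"
  define d where "d = norm p"
  \<comment> \<open>\<open>v\<close> is chosen so close to \<open>p\<close> that \<open>1 - norm v * k0 / 2\<close> stays above \<open>c\<close>.\<close>
  define c where "c = (1 - k0 * d / 2) / 2"
  have "c > 0"
    using small unfolding c_def d_def p_def by simp
  define \<delta> where "\<delta> = min (c / (\<bar>k0\<bar> + 1)) (\<epsilon> * c / (d + 1))"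
  have k0_pos: "\<bar>k0\<bar> + 1 > 0" and d_pos: "d + 1 > 0"
    unfolding d_def by (simp_all add: add_nonneg_pos)
  then have "\<delta> > 0"
    using \<open>c > 0\<close> \<open>\<epsilon> > 0\<close> unfolding \<delta>_def by simp
  have "\<delta> \<le> c / (\<bar>k0\<bar> + 1)" "\<delta> \<le> \<epsilon> * c / (d + 1)"
    unfolding \<delta>_def by simp_all
  then have \<delta>_k0: "\<delta> * (\<bar>k0\<bar> + 1) \<le> c" and \<delta>_d: "\<delta> * (d + 1) \<le> \<epsilon> * c"
    using pos_le_divide_eq[OF k0_pos] pos_le_divide_eq[OF d_pos] by blast+
  obtain v where "v \<in> adjoint_range (F' xdag)" and "dist v p < \<delta>"
    using source \<open>\<delta> > 0\<close> unfolding p_def by (auto simp: closure_approachable)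
  then obtain w where v: "\<And>u. inner v u = inner w (F' xdag u)" and pv: "norm (p - v) < \<delta>"
    unfolding adjoint_range_def by (auto simp: dist_norm norm_minus_commute)
  have "(norm v - d) * k0 \<le> \<delta> * \<bar>k0\<bar>"
  proof -
    have "\<bar>norm v - d\<bar> \<le> \<delta>"
      using norm_triangle_ineq3[of v p] pv unfolding d_def by (simp add: norm_minus_commute)
    then have "\<bar>norm v - d\<bar> * \<bar>k0\<bar> \<le> \<delta> * \<bar>k0\<bar>"
      by (rule mult_right_mono) simp
    moreover have "(norm v - d) * k0 \<le> \<bar>norm v - d\<bar> * \<bar>k0\<bar>"
      using abs_ge_self[of "(norm v - d) * k0"] by (simp add: abs_mult)
    ultimately show ?thesis
      by linarith
  qed
  moreover have "\<delta> * \<bar>k0\<bar> \<le> c"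
    using \<delta>_k0 \<open>\<delta> > 0\<close> by (simp add: algebra_simps)
  ultimately have "norm v * k0 \<le> d * k0 + c"
    by (simp add: algebra_simps)
  with \<open>c > 0\<close> have contraction: "c \<le> 1 - norm v * k0 / 2"
    unfolding c_def by (simp add: field_simps)
  have "norm (p - v) * d \<le> \<delta> * d"
    using pv unfolding d_def by (intro mult_right_mono) auto
  also have "\<dots> \<le> \<delta> * (d + 1)"
    using \<open>\<delta> > 0\<close> by simp
  finally have "norm (p - v) * d \<le> \<epsilon> * c"
    using \<delta>_d by linarith
  show ?thesis
  proof (intro exI allI impI)
    fix \<alpha> :: real
    assume "\<alpha> > 0"
    define E where "E = norm (xa \<alpha> - xdag)^2"
    have "c * E \<le> (1 - norm v * k0 / 2) * E"
      using contraction unfolding E_def by (simp add: mult_right_mono)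
    also have "\<dots> \<le> \<epsilon> * c + 2 * \<alpha> * d * norm w"
      using error_estimate[OF \<open>\<alpha> > 0\<close> v] \<open>norm (p - v) * d \<le> \<epsilon> * c\<close>
      unfolding E_def d_def p_def by simp
    finally show "E \<le> \<epsilon> + 2 * d * norm w / c * \<alpha>"
      using \<open>c > 0\<close> by (simp add: field_simps)
  qed
qed

lemma tendsto_norm_error_0:
  assumes "k0 * norm (xdag - xbar) < 2"
    and "xdag - xbar \<in> closure (adjoint_range (F' xdag))"
  shows "((\<lambda>\<alpha>. norm (xa \<alpha> - xdag)) \<longlongrightarrow> 0) (at_right 0)"
proof -
  have "((\<lambda>\<alpha>. norm (xa \<alpha> - xdag)^2) \<longlongrightarrow> 0) (at_right 0)"
    using norm_error_sq_le_eps_plus_linear[OF assms]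
    by (intro tendsto_0_at_right_0_if_le_eps_plus_linear) auto
  then have "((\<lambda>\<alpha>. sqrt (norm (xa \<alpha> - xdag)^2)) \<longlongrightarrow> sqrt 0) (at_right 0)"
    by (rule tendsto_real_sqrt)
  then show ?thesis
    by simp
qed

end

theorem corollary5p2:
  fixes F :: "'a::{real_inner, complete_space} \<Rightarrow> 'a"
    and F' :: "'a \<Rightarrow> ('a \<Rightarrow>\<^sub>L 'a)"
    and g :: "'a \<Rightarrow> 'a \<Rightarrow> 'a \<Rightarrow> 'a"
    and xdag xbar y :: 'a and r k0 :: real
    and xa :: "real \<Rightarrow> 'a"
  assumes separable: "separable_space (euclidean :: 'a topology)"
    and mono: "monotone_op F"
    and hemi: "hemicontinuous F"
    and sol: "F xdag = y"
    and r: "r > norm (xdag - xbar)"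
    and deriv: "\<And>x. x \<in> cball xdag r \<Longrightarrow> (F has_derivative blinfun_apply (F' x)) (at x)"
    and cont: "continuous_on (cball xdag r) F'"
    and nonlin_eq: "\<And>x' x v. x' \<in> cball xdag r \<Longrightarrow> x \<in> cball xdag r \<Longrightarrow>
        blinfun_apply (F' x' - F' x) v = blinfun_apply (F' x) (g x' x v)"
    and nonlin_bd: "\<And>x' x v. x' \<in> cball xdag r \<Longrightarrow> x \<in> cball xdag r \<Longrightarrow>
        norm (g x' x v) \<le> k0 * norm (x' - x) * norm v"
    and small: "k0 * norm (xdag - xbar) < 2"
    and orth: "\<And>v. blinfun_apply (F' xdag) v = 0 \<Longrightarrow> inner (xdag - xbar) v = 0"
    and xa: "\<And>\<alpha>. \<alpha> > 0 \<Longrightarrow> F (xa \<alpha>) + \<alpha> *\<^sub>R (xa \<alpha> - xbar) = y"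
  shows "((\<lambda>\<alpha>. norm (xa \<alpha> - xdag)) \<longlongrightarrow> 0) (at_right 0)"
  \<comment> \<open>Separability, hemicontinuity and continuity of \<open>F'\<close> only serve the existence of \<open>x\<^sub>\<alpha>\<close>, which is assumed here.\<close>
proof -
  interpret monotone_lavrentiev F F' g xdag xbar y r k0 xa
    by unfold_locales (fact mono sol r deriv nonlin_eq nonlin_bd xa)+
  have "xdag - xbar \<in> closure (adjoint_range (F' xdag))"
    using orth by (rule orthogonal_kernel_imp_in_closure_adjoint_range)
  with small show ?thesis
    by (rule tendsto_norm_error_0)
qed

end
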